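(* Let $h$ be a uniformly locally univalent analytic function in $\mathbb{D}$, let $\delta>0$, and suppose there is $z_0\in\mathbb{D}$ with $(1-|z_0|^2)^2|S_h(z_0)|>\delta$. Then there is a constant $c=c(\delta,h)\in(0,1)$, depending only on $\delta$ and $h$ (not on $z_0$), such that $$(1-|z|^2)^2|S_h(z)|>\frac{\delta}{32}\quad\text{for all } z\in B\big(z_0,\,c(1-|z_0|^2)\big),$$ where $B(a,r)$ denotes the Euclidean disk of center $a$ and radius $r$.
   Context: $\mathbb{D}$ is the unit disk and $S_h=(h''/h')'-\frac12(h''/h')^2$ is the Schwarzian derivative of a locally univalent analytic $h$. The hyperbolic distance is $d_h(z,\xi)=\frac12\log\frac{1+p(z,\xi)}{1-p(z,\xi)}$ with $p(z,\xi)=\left|\frac{z-\xi}{1-\overline{\xi}z}\right|$, and $D(a,\rho)$ is the hyperbolic disk of center $a$ and radius $\rho$; $h$ is uniformly locally univalent if there is $\rho\in(0,\infty]$ such that $h$ is univalent on every $D(a,\rho)$, $a\in\mathbb{D}$. *)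

theory Defs
  imports "HOL-Analysis.Analysis"
begin

definition unit_disk :: "complex set" where
  "unit_disk = ball 0 1"

definition schwarzian :: "(complex \<Rightarrow> complex) \<Rightarrow> complex \<Rightarrow> complex" where
  "schwarzian h z =
     deriv (\<lambda>w. deriv (deriv h) w / deriv h w) z
     - (1/2) * (deriv (deriv h) z / deriv h z)\<^sup>2"

definition pseudo_hyp :: "complex \<Rightarrow> complex \<Rightarrow> real" where
  "pseudo_hyp z \<xi> = cmod ((z - \<xi>) / (1 - cnj \<xi> * z))"

definition hyp_dist :: "complex \<Rightarrow> complex \<Rightarrow> real" where
  "hyp_dist z \<xi> = (1/2) * ln ((1 + pseudo_hyp z \<xi>) / (1 - pseudo_hyp z \<xi>))"

text \<open>Hyperbolic disk D(a,rho); rho = infinity (extended real) gives the whole disk.\<close>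
definition hyp_disk :: "complex \<Rightarrow> ereal \<Rightarrow> complex set" where
  "hyp_disk a \<rho> = {z \<in> unit_disk. ereal (hyp_dist z a) < \<rho>}"

definition unif_loc_univalent :: "(complex \<Rightarrow> complex) \<Rightarrow> bool" where
  "unif_loc_univalent h \<longleftrightarrow>
     (\<exists>\<rho>::ereal. 0 < \<rho> \<and> (\<forall>a \<in> unit_disk. inj_on h (hyp_disk a \<rho>)))"

end

theory Submission
  imports Defs "HOL-Complex_Analysis.Complex_Analysis"
begin

text \<open>
  Uniform local univalence yields \<open>t > 0\<close> such that \<open>h\<close> is injective on every Euclidean disk
  \<open>B(a, t(1 - |a|))\<close>. For a function univalent on a disk of radius \<open>R\<close>, Schottky's theorem
  bounds its growth on the concentric disk of radius \<open>R/4\<close> by a multiple of \<open>R |f'(a)|\<close>,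
  and Cauchy's estimates turn this into \<open>|S_f(a)| \<le> K/R\<^sup>2\<close>. Hence
  \<open>(1 - |a|\<^sup>2)\<^sup>2 |S_h(a)| \<le> N\<close> on the whole disk. On \<open>B(z0, (1 - |z0|)/2)\<close> the weight
  \<open>1 - |w|\<^sup>2\<close> is comparable to \<open>1 - |z0|\<^sup>2\<close>, so \<open>S_h\<close> is bounded there by
  \<open>16N/(1 - |z0|\<^sup>2)\<^sup>2\<close>, and the Schwarz lemma bounds its oscillation on
  \<open>B(z0, c(1 - |z0|\<^sup>2))\<close> by a multiple of \<open>cN/(1 - |z0|\<^sup>2)\<^sup>2\<close>. Choosing \<open>c\<close> of order
  \<open>\<delta>/N\<close> keeps \<open>(1 - |z|\<^sup>2)\<^sup>2 |S_h(z)|\<close> above a fixed fraction of \<open>\<delta>\<close>.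
\<close>

section \<open>Schwarzian derivative\<close>

lemma schwarzian_altdef:
  assumes "f holomorphic_on S" "open S" "a \<in> S" "deriv f a \<noteq> 0"
  shows "schwarzian f a = deriv (deriv (deriv f)) a / deriv f a
            - 3/2 * (deriv (deriv f) a / deriv f a)\<^sup>2"
proof -
  have f1: "(deriv f has_field_derivative deriv (deriv f) a) (at a)"
    by (rule holomorphic_derivI[OF holomorphic_deriv[OF assms(1,2)] assms(2,3)])
  have f2: "(deriv (deriv f) has_field_derivative deriv (deriv (deriv f)) a) (at a)"
    by (rule holomorphic_derivI[OF holomorphic_deriv[OF holomorphic_deriv[OF assms(1,2)] assms(2)] assms(2,3)])
  have "deriv (\<lambda>w. deriv (deriv f) w / deriv f w) a
     = (deriv (deriv (deriv f)) a * deriv f a - deriv (deriv f) a * deriv (deriv f) a) / (deriv f a * deriv f a)"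
    by (rule DERIV_imp_deriv[OF DERIV_divide[OF f2 f1 assms(4)]])
  then have "deriv (\<lambda>w. deriv (deriv f) w / deriv f w) a
     = deriv (deriv (deriv f)) a / deriv f a - (deriv (deriv f) a / deriv f a)\<^sup>2"
    using assms(4) by (simp add: field_simps power2_eq_square)
  then show ?thesis unfolding schwarzian_def by (simp add: field_simps)
qed

lemma schwarzian_holomorphic:
  assumes "f holomorphic_on S" "open S" "\<And>z. z \<in> S \<Longrightarrow> deriv f z \<noteq> 0"
  shows "schwarzian f holomorphic_on S"
proof -
  have pre: "(\<lambda>w. deriv (deriv f) w / deriv f w) holomorphic_on S"
    using assms by (intro holomorphic_intros) auto
  show ?thesis
    unfolding schwarzian_def[abs_def]
    using holomorphic_deriv[OF pre assms(2)] pre assms by (intro holomorphic_intros) auto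
qed

section \<open>Geometry of the unit disk\<close>

lemma one_minus_square_le: "1 - x\<^sup>2 \<le> 2 * (1 - x)" for x :: real
proof -
  have "0 \<le> (1 - x)\<^sup>2"
    by simp
  then show ?thesis
    by (simp add: power2_eq_square algebra_simps)
qed

lemma ball_subset_unit_disk:
  assumes "a \<in> unit_disk" "t \<le> 1"
  shows "ball a (t * (1 - cmod a)) \<subseteq> unit_disk"
proof
  fix z assume "z \<in> ball a (t * (1 - cmod a))"
  moreover have "t * (1 - cmod a) \<le> 1 - cmod a"
    using assms mult_right_mono[of t 1 "1 - cmod a"] by (simp add: unit_disk_def)
  ultimately have "cmod (z - a) < 1 - cmod a"
    by (simp add: dist_norm norm_minus_commute)
  moreover have "cmod z \<le> cmod a + cmod (z - a)"
    by (metis add.commute diff_add_cancel norm_triangle_ineq)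
  ultimately show "z \<in> unit_disk"
    by (simp add: unit_disk_def)
qed

lemma one_minus_norm_sq_near_ge:
  assumes z0: "cmod z0 < 1" and w: "dist z0 w < (1 - cmod z0) / 2"
  shows "(1 - (cmod z0)\<^sup>2) / 4 \<le> 1 - (cmod w)\<^sup>2"
proof -
  have "cmod w \<le> cmod z0 + dist z0 w"
    by (metis dist_0_norm dist_commute dist_triangle)
  then have lt: "(1 - cmod z0) / 2 < 1 - cmod w"
    using w by argo
  then have "(cmod w)\<^sup>2 \<le> cmod w"
    using z0 by (simp add: power2_eq_square mult_left_le_one_le)
  then show ?thesis
    using lt one_minus_square_le[of "cmod z0"] by argo
qed

lemma hyp_dist_less_artanh:
  assumes "pseudo_hyp z a < s" "s < 1"
  shows "hyp_dist z a < artanh s"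
proof -
  define p where "p = pseudo_hyp z a"
  have "0 \<le> p" by (simp add: p_def pseudo_hyp_def)
  then have "(1 + p) / (1 - p) < (1 + s) / (1 - s)" "0 < (1 + p) / (1 - p)"
    using assms by (auto simp: p_def[symmetric] field_simps)
  then have "ln ((1 + p) / (1 - p)) < ln ((1 + s) / (1 - s))"
    by simp
  then show ?thesis by (simp add: hyp_dist_def artanh_def p_def)
qed

lemma pseudo_hyp_less:
  assumes a: "cmod a < 1" and s: "s \<le> 1" and z: "cmod (z - a) < s/2 * (1 - cmod a)"
  shows "pseudo_hyp z a < s"
proof -
  have "cmod z \<le> cmod a + cmod (z - a)"
    by (metis add.commute diff_add_cancel norm_triangle_ineq)
  moreover have "s/2 * (1 - cmod a) \<le> (1 - cmod a)/2"
    using mult_right_mono[of s 1 "1 - cmod a"] s a by simp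
  ultimately have "(1 - cmod a)/2 < 1 - cmod z"
    using z by argo
  also have "1 - cmod z \<le> 1 - cmod (cnj a * z)"
    using a by (simp add: norm_mult mult_left_le_one_le)
  also have "\<dots> \<le> cmod (1 - cnj a * z)"
    by (metis norm_one norm_triangle_ineq2)
  finally have den: "(1 - cmod a)/2 < cmod (1 - cnj a * z)" .
  have "pseudo_hyp z a = cmod (z - a) / cmod (1 - cnj a * z)"
    by (simp add: pseudo_hyp_def norm_divide)
  also have "\<dots> \<le> cmod (z - a) / ((1 - cmod a)/2)"
    using den a by (intro divide_left_mono mult_pos_pos) auto
  also have "\<dots> < s/2 * (1 - cmod a) / ((1 - cmod a)/2)"
    using z a by (intro divide_strict_right_mono) auto
  also have "\<dots> = s"
    using a by (simp add: field_simps)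
  finally show ?thesis .
qed

lemma ball_subset_hyp_disk:
  assumes "0 < \<rho>"
  obtains t :: real where "0 < t" "t \<le> 1"
    "\<And>a. a \<in> unit_disk \<Longrightarrow> ball a (t * (1 - cmod a)) \<subseteq> hyp_disk a \<rho>"
proof -
  obtain r :: real where r: "0 < r" "ereal r \<le> \<rho>"
  proof (cases \<rho>)
    case (real r)
    then show ?thesis using assms that[of r] by auto
  qed (use assms that[of 1] in auto)
  have tanh_r: "0 < tanh r" "tanh r < 1"
    using r tanh_real_lt_1 by auto
  show ?thesis
  proof
    show "0 < tanh r / 2" "tanh r / 2 \<le> 1" using tanh_r by auto
    fix a assume a: "a \<in> unit_disk"
    show "ball a (tanh r / 2 * (1 - cmod a)) \<subseteq> hyp_disk a \<rho>"
    proof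
      fix z assume z: "z \<in> ball a (tanh r / 2 * (1 - cmod a))"
      then have "pseudo_hyp z a < tanh r"
        using a tanh_r by (intro pseudo_hyp_less) (auto simp: unit_disk_def dist_norm norm_minus_commute)
      then have "hyp_dist z a < r"
        using hyp_dist_less_artanh[OF _ tanh_r(2)] by (simp add: artanh_tanh_real)
      then have "ereal (hyp_dist z a) < \<rho>"
        using r(2) by (simp add: less_le_trans[of _ "ereal r"])
      moreover have "z \<in> unit_disk"
        using ball_subset_unit_disk[OF a, of "tanh r / 2"] z tanh_r by auto
      ultimately show "z \<in> hyp_disk a \<rho>"
        by (simp add: hyp_disk_def)
    qed
  qed
qed

section \<open>Univalent functions on a disk\<close>

lemma holomorphic_sqrt_with_value:
  assumes "u holomorphic_on S" "convex S" "a \<in> S" "\<And>z. z \<in> S \<Longrightarrow> u z \<noteq> 0" "u a = c\<^sup>2"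
  obtains p where "p holomorphic_on S" "\<And>z. z \<in> S \<Longrightarrow> u z = (p z)\<^sup>2" "p a = c"
proof -
  obtain q where q: "q holomorphic_on S" "\<And>z. z \<in> S \<Longrightarrow> u z = (q z)\<^sup>2"
    using contractible_imp_holomorphic_sqrt[OF assms(1) convex_imp_contractible[OF assms(2)] assms(4)]
    by blast
  have "(q a)\<^sup>2 = c\<^sup>2" "c \<noteq> 0"
    using q(2) assms(3-5) by force+
  then have qa: "(c / q a)\<^sup>2 = 1" "q a \<noteq> 0"
    by (auto simp: power_divide)
  show ?thesis
  proof
    show "(\<lambda>z. c / q a * q z) holomorphic_on S"
      using q(1) by (intro holomorphic_intros)
    show "u z = (c / q a * q z)\<^sup>2" if "z \<in> S" for z
      using q(2)[OF that] qa(1) by (simp only: power_mult_distrib) simp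
    show "c / q a * q a = c"
      using qa by simp
  qed
qed

lemma nonvanishing_holomorphic_min_modulus_on_sphere:
  assumes hol: "f holomorphic_on ball a R" and nz: "\<And>z. z \<in> ball a R \<Longrightarrow> f z \<noteq> 0"
    and r: "0 < r" "r < R"
  obtains z1 where "z1 \<in> sphere a r" "cmod (f z1) \<le> cmod (f a)"
proof -
  have sub: "cball a r \<subseteq> ball a R"
    using r by (simp add: cball_subset_ball_iff)
  have hol_inv: "(\<lambda>z. 1 / f z) holomorphic_on ball a R"
    using hol nz by (intro holomorphic_intros) auto
  then have cont: "continuous_on (cball a r) (\<lambda>z. 1 / f z)"
    using holomorphic_on_imp_continuous_on holomorphic_on_subset sub by blast
  obtain z1 where z1: "z1 \<in> sphere a r" and max: "\<forall>y \<in> sphere a r. cmod (1 / f y) \<le> cmod (1 / f z1)"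
    using continuous_attains_sup[of "sphere a r" "\<lambda>z. cmod (1 / f z)"] r
      continuous_on_norm[OF continuous_on_subset[OF cont sphere_cball]] by fastforce
  have "cmod (1 / f a) \<le> cmod (1 / f z1)"
  proof (rule maximum_modulus_frontier[of "\<lambda>z. 1 / f z" "cball a r"])
    have "ball a r \<subseteq> ball a R"
      using r by auto
    then show "(\<lambda>z. 1 / f z) holomorphic_on interior (cball a r)"
      by (simp add: holomorphic_on_subset[OF hol_inv])
  qed (use cont max r in \<open>auto simp: frontier_cball\<close>)
  moreover have "z1 \<in> ball a R" "a \<in> ball a R"
    using z1 sub r by auto
  ultimately have "cmod (f z1) \<le> cmod (f a)"
    using nz by (simp add: norm_divide divide_le_eq_1 field_simps)
  with z1 show ?thesis by (rule that)
qed

text \<open>The exponent \<open>16\<close> is Schottky's \<open>2 + 2r + 12t/(1 - t)\<close> for \<open>|p 0| \<le> r = 1\<close> and \<open>|\<zeta>| \<le> t = 1/2\<close>.\<close>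
definition univalent_growth_const :: real where
  "univalent_growth_const = 1 + (exp (pi * exp (pi * 16)))\<^sup>2"

lemma univalent_normalized_sqrt:
  fixes f :: "complex \<Rightarrow> complex"
  assumes hol: "f holomorphic_on ball a R" and inj: "inj_on f (ball a R)"
    and z1: "z1 \<in> ball a R" "R/2 < dist a z1"
  obtains p where "p holomorphic_on cball 0 1" "p 0 = -1"
    "\<And>\<zeta>. \<zeta> \<in> cball 0 1 \<Longrightarrow> \<not> (p \<zeta> = 0 \<or> p \<zeta> = 1)"
    "\<And>\<zeta>. \<zeta> \<in> cball 0 1 \<Longrightarrow> f (a + of_real (R/2) * \<zeta>) - f a = (f z1 - f a) * (1 - (p \<zeta>)\<^sup>2)"
proof -
  have R: "0 < R" "a \<in> ball a R"
    using z1 by auto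
  define w0 where "w0 = f z1 - f a"
  have w0: "w0 \<noteq> 0"
    using inj_onD[OF inj _ z1(1) R(2)] z1 R by (force simp: w0_def)
  define g where "g \<zeta> = a + of_real (R/2) * \<zeta>" for \<zeta>
  have g_dist: "dist a (g \<zeta>) \<le> R/2" if "\<zeta> \<in> cball 0 1" for \<zeta>
    using that R mult_left_le[of "cmod \<zeta>" "R/2"] by (simp add: g_def dist_norm norm_mult)
  then have g_in: "g \<zeta> \<in> ball a R" if "\<zeta> \<in> cball 0 1" for \<zeta>
    using that R by fastforce
  define u where "u \<zeta> = 1 - (f (g \<zeta>) - f a) / w0" for \<zeta>
  have "(f \<circ> g) holomorphic_on cball 0 1"
    using g_in unfolding g_def by (intro holomorphic_on_compose_gen[OF _ hol]) (auto intro!: holomorphic_intros)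
  then have hol_u: "u holomorphic_on cball 0 1"
    unfolding u_def using w0 by (intro holomorphic_intros) (auto simp: o_def)
  have u_eq_iff: "u \<zeta> = 1 - (f w - f a) / w0 \<longleftrightarrow> g \<zeta> = w"
    if "\<zeta> \<in> cball 0 1" "w \<in> ball a R" for \<zeta> w
  proof -
    have "u \<zeta> = 1 - (f w - f a) / w0 \<longleftrightarrow> f (g \<zeta>) = f w"
      using w0 by (auto simp: u_def divide_cancel_right)
    also have "\<dots> \<longleftrightarrow> g \<zeta> = w"
      using inj_onD[OF inj _ g_in[OF that(1)] that(2)] by auto
    finally show ?thesis .
  qed
  have u_nz: "u \<zeta> \<noteq> 0" if "\<zeta> \<in> cball 0 1" for \<zeta>
    using u_eq_iff[OF that z1(1)] g_dist[OF that] z1(2) w0 by (auto simp: w0_def)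
  obtain p where hol_p: "p holomorphic_on cball 0 1"
    and u_p: "\<And>\<zeta>. \<zeta> \<in> cball 0 1 \<Longrightarrow> u \<zeta> = (p \<zeta>)\<^sup>2" and p0: "p 0 = -1"
    by (rule holomorphic_sqrt_with_value[OF hol_u convex_cball, of 0 "-1"])
      (use u_nz in \<open>auto simp: u_def g_def\<close>)
  \<comment> \<open>\<open>p\<close> omits \<open>0\<close> because \<open>f\<close> omits \<open>f z1\<close>, and omits \<open>1\<close> because \<open>f\<close> takes the value \<open>f a\<close> only at \<open>a\<close>.\<close>
  have "\<not> (p \<zeta> = 0 \<or> p \<zeta> = 1)" if \<zeta>: "\<zeta> \<in> cball 0 1" for \<zeta>
  proof -
    have "g \<zeta> = a" if "p \<zeta> = 1"
      using u_eq_iff[OF \<zeta> R(2)] u_p[OF \<zeta>] that by simp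
    then have "p \<zeta> \<noteq> 1"
      using R p0 by (auto simp: g_def)
    then show ?thesis
      using u_nz[OF \<zeta>] u_p[OF \<zeta>] by auto
  qed
  moreover have "f (a + of_real (R/2) * \<zeta>) - f a = (f z1 - f a) * (1 - (p \<zeta>)\<^sup>2)"
    if "\<zeta> \<in> cball 0 1" for \<zeta>
    using u_p[OF that, symmetric] w0 by (simp add: u_def g_def w0_def)
  ultimately show ?thesis
    using that[OF hol_p p0] by blast
qed

lemma univalent_growth_bound_by_far_value:
  fixes f :: "complex \<Rightarrow> complex"
  assumes hol: "f holomorphic_on ball a R" and inj: "inj_on f (ball a R)"
    and z1: "z1 \<in> ball a R" "R/2 < dist a z1" and z: "z \<in> cball a (R/4)"
  shows "cmod (f z - f a) \<le> univalent_growth_const * cmod (f z1 - f a)"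
proof -
  obtain p where hol_p: "p holomorphic_on cball 0 1" and p0: "p 0 = -1"
    and p_omits: "\<And>\<zeta>. \<zeta> \<in> cball 0 1 \<Longrightarrow> \<not> (p \<zeta> = 0 \<or> p \<zeta> = 1)"
    and f_p: "\<And>\<zeta>. \<zeta> \<in> cball 0 1 \<Longrightarrow> f (a + of_real (R/2) * \<zeta>) - f a = (f z1 - f a) * (1 - (p \<zeta>)\<^sup>2)"
    using univalent_normalized_sqrt[OF hol inj z1] by metis
  have R: "0 < R"
    using z1 by auto
  define \<zeta> where "\<zeta> = (z - a) / of_real (R/2)"
  have "cmod (of_real (R/2) :: complex) = R/2"
    using R by simp
  then have "cmod \<zeta> = cmod (z - a) / (R/2)"
    by (simp only: \<zeta>_def norm_divide)
  also have "\<dots> \<le> 1/2"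
    using z R by (simp add: dist_norm norm_minus_commute field_simps)
  finally have \<zeta>_half: "cmod \<zeta> \<le> 1/2" .
  have "cmod (p \<zeta>) \<le> exp (pi * exp (pi * (2 + 2 * 1 + 12 * (1/2) / (1 - 1/2))))"
    by (rule Schottky[OF hol_p _ p_omits]) (use p0 \<zeta>_half in auto)
  then have p_bound: "(cmod (p \<zeta>))\<^sup>2 \<le> (exp (pi * exp (pi * 16)))\<^sup>2"
    by (simp add: power_mono)
  have "a + of_real (R/2) * \<zeta> = z"
    using R by (simp add: \<zeta>_def field_simps)
  then have "cmod (f z - f a) = cmod (1 - (p \<zeta>)\<^sup>2) * cmod (f z1 - f a)"
    using f_p[of \<zeta>] \<zeta>_half by (simp add: norm_mult)
  also have "\<dots> \<le> (1 + (cmod (p \<zeta>))\<^sup>2) * cmod (f z1 - f a)"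
    by (intro mult_right_mono) (auto simp: norm_power[symmetric] intro: order_trans[OF norm_triangle_ineq4])
  also have "\<dots> \<le> univalent_growth_const * cmod (f z1 - f a)"
    using p_bound by (intro mult_right_mono) (auto simp: univalent_growth_const_def)
  finally show ?thesis .
qed

lemma univalent_growth_bound:
  fixes f :: "complex \<Rightarrow> complex"
  assumes hol: "f holomorphic_on ball a R" and inj: "inj_on f (ball a R)"
    and z: "z \<in> cball a (R/4)"
  shows "cmod (f z - f a) \<le> 3/4 * univalent_growth_const * R * cmod (deriv f a)"
proof (cases "0 < R")
  case True
  have aR: "a \<in> ball a R"
    using True by simp
  define \<psi> where "\<psi> z = (if z = a then deriv f a else (f z - f a) / (z - a))" for z
  have hol_\<psi>: "\<psi> holomorphic_on ball a R"
    unfolding \<psi>_def by (rule pole_lemma_open[OF hol open_ball])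
  have nz_\<psi>: "\<psi> z \<noteq> 0" if "z \<in> ball a R" for z
    using holomorphic_injective_imp_regular[OF hol open_ball inj aR] inj_onD[OF inj _ that aR]
    by (auto simp: \<psi>_def)
  obtain z1 where z1: "z1 \<in> sphere a (3/4 * R)" "cmod (\<psi> z1) \<le> cmod (deriv f a)"
    using nonvanishing_holomorphic_min_modulus_on_sphere[OF hol_\<psi> nz_\<psi>, of "3/4 * R"] True
    by (auto simp: \<psi>_def)
  have "z1 \<noteq> a" "cmod (z1 - a) = 3/4 * R"
    using z1(1) True by (auto simp: dist_norm norm_minus_commute)
  then have "cmod (f z1 - f a) = cmod (z1 - a) * cmod (\<psi> z1)"
    by (simp add: \<psi>_def norm_divide)
  also have "\<dots> = 3/4 * R * cmod (\<psi> z1)"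
    using \<open>cmod (z1 - a) = 3/4 * R\<close> by simp
  also have "\<dots> \<le> 3/4 * R * cmod (deriv f a)"
    using z1(2) True by simp
  finally have "cmod (f z1 - f a) \<le> 3/4 * R * cmod (deriv f a)" .
  moreover have "cmod (f z - f a) \<le> univalent_growth_const * cmod (f z1 - f a)"
    using z1 True by (intro univalent_growth_bound_by_far_value[OF hol inj _ _ z]) auto
  moreover have "0 \<le> univalent_growth_const"
    by (simp add: univalent_growth_const_def)
  ultimately have "cmod (f z - f a) \<le> univalent_growth_const * (3/4 * R * cmod (deriv f a))"
    by (meson mult_left_mono order_trans)
  then show ?thesis
    by (simp add: algebra_simps)
next
  case False
  have "dist a z \<le> R/4"
    using z by simp
  with False have "dist a z = 0" "R = 0"
    using zero_le_dist[of a z] by linarith+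
  then show ?thesis
    by simp
qed

lemma schwarzian_bound_by_oscillation:
  fixes f :: "complex \<Rightarrow> complex"
  assumes hol: "f holomorphic_on ball a r" and cont: "continuous_on (cball a r) f"
    and r: "0 < r" and d: "deriv f a \<noteq> 0"
    and osc: "\<And>w. w \<in> ball a r \<Longrightarrow> cmod (f w - f a) < k * r * cmod (deriv f a)"
  shows "cmod (schwarzian f a) \<le> 6 * (k + k\<^sup>2) / r\<^sup>2"
proof -
  define B where "B = k * r * cmod (deriv f a)"
  have cauchy: "cmod ((deriv ^^ n) f a) \<le> fact n * B / r ^ n" if "0 < n" for n
    by (rule Cauchy_higher_deriv_bound[OF hol cont, where y = "f a"])
      (use osc r that in \<open>auto simp: B_def dist_norm norm_minus_commute\<close>)
  have "cmod (deriv (deriv f) a) \<le> 2 * B / r\<^sup>2"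
    using cauchy[of 2] by (simp add: numeral_2_eq_2)
  then have f2: "cmod (deriv (deriv f) a / deriv f a) \<le> 2 * k / r"
    using d r by (simp add: B_def norm_divide field_simps power2_eq_square)
  have "cmod (deriv (deriv (deriv f)) a) \<le> 6 * B / r ^ 3"
    using cauchy[of 3] by (simp add: numeral_3_eq_3 fact_numeral)
  then have f3: "cmod (deriv (deriv (deriv f)) a / deriv f a) \<le> 6 * k / r\<^sup>2"
    using d r by (simp add: B_def norm_divide field_simps power2_eq_square power3_eq_cube)
  have "schwarzian f a = deriv (deriv (deriv f)) a / deriv f a
            - 3/2 * (deriv (deriv f) a / deriv f a)\<^sup>2"
    using schwarzian_altdef[OF hol open_ball _ d] r by simp
  then have "cmod (schwarzian f a)
      \<le> cmod (deriv (deriv (deriv f)) a / deriv f a) + cmod (3/2 * (deriv (deriv f) a / deriv f a)\<^sup>2)"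
    by (simp only: norm_triangle_ineq4)
  also have "\<dots> = cmod (deriv (deriv (deriv f)) a / deriv f a)
                    + 3/2 * (cmod (deriv (deriv f) a / deriv f a))\<^sup>2"
    by (simp add: norm_mult norm_power)
  also have "\<dots> \<le> 6 * k / r\<^sup>2 + 3/2 * (2 * k / r)\<^sup>2"
    using f2 f3 by (intro add_mono mult_left_mono power_mono) auto
  also have "\<dots> = 6 * (k + k\<^sup>2) / r\<^sup>2"
    using r by (simp add: field_simps power2_eq_square)
  finally show ?thesis .
qed

lemma univalent_schwarzian_bound:
  fixes f :: "complex \<Rightarrow> complex"
  assumes hol: "f holomorphic_on ball a R" and inj: "inj_on f (ball a R)" and R: "0 < R"
  shows "cmod (schwarzian f a)
           \<le> 96 * (4 * univalent_growth_const + (4 * univalent_growth_const)\<^sup>2) / R\<^sup>2"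
proof -
  define C where "C = univalent_growth_const"
  have C: "0 < C"
    by (simp add: C_def univalent_growth_const_def add_pos_nonneg)
  have d: "deriv f a \<noteq> 0"
    using holomorphic_injective_imp_regular[OF hol open_ball inj] R by simp
  have sub: "cball a (R/4) \<subseteq> ball a R"
    using R by (simp add: cball_subset_ball_iff)
  have "cmod (f w - f a) < 4 * C * (R/4) * cmod (deriv f a)" if "w \<in> ball a (R/4)" for w
  proof -
    have "cmod (f w - f a) \<le> 3/4 * C * R * cmod (deriv f a)"
      using that univalent_growth_bound[OF hol inj] by (simp add: C_def)
    also have "\<dots> < 4 * C * (R/4) * cmod (deriv f a)"
      using C R d by simp
    finally show ?thesis .
  qed
  moreover have "f holomorphic_on ball a (R/4)" "continuous_on (cball a (R/4)) f"
    using holomorphic_on_subset[OF hol] holomorphic_on_imp_continuous_on sub ball_subset_cball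
    by blast+
  ultimately have "cmod (schwarzian f a) \<le> 6 * (4 * C + (4 * C)\<^sup>2) / (R/4)\<^sup>2"
    using R d by (intro schwarzian_bound_by_oscillation) auto
  then show ?thesis
    by (simp add: C_def field_simps power2_eq_square)
qed

section \<open>Functions with bounded weighted norm\<close>

text \<open>The factor \<open>3M\<close> (instead of the sharp \<open>2M\<close>) makes the rescaled function map into the
  open unit disk, as the Schwarz lemma requires.\<close>
lemma bounded_holomorphic_diff_le:
  fixes F :: "complex \<Rightarrow> complex"
  assumes hol: "F holomorphic_on ball z0 r" and M: "0 < M"
    and bound: "\<And>w. w \<in> ball z0 r \<Longrightarrow> cmod (F w) \<le> M"
    and z: "z \<in> ball z0 r"
  shows "cmod (F z - F z0) \<le> 3 * M * cmod (z - z0) / r"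
proof -
  have r: "0 < r"
    using z le_less_trans[OF zero_le_dist] by auto
  then have z0: "z0 \<in> ball z0 r"
    by simp
  define g where "g \<xi> = (F (z0 + of_real r * \<xi>) - F z0) / of_real (3 * M)" for \<xi>
  have in_ball: "z0 + of_real r * \<xi> \<in> ball z0 r" if "cmod \<xi> < 1" for \<xi>
    using that r by (simp add: dist_norm norm_mult)
  have "(F \<circ> (\<lambda>\<xi>. z0 + of_real r * \<xi>)) holomorphic_on ball 0 1"
    using in_ball by (intro holomorphic_on_compose_gen[OF _ hol]) (auto intro!: holomorphic_intros)
  then have hol_g: "g holomorphic_on ball 0 1"
    unfolding g_def using M by (intro holomorphic_intros) (auto simp: o_def)
  have g_lt_1: "cmod (g \<xi>) < 1" if "cmod \<xi> < 1" for \<xi>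
  proof -
    have "cmod (F (z0 + of_real r * \<xi>) - F z0) \<le> M + M"
      using bound[OF in_ball[OF that]] bound[OF z0] by (metis add_mono norm_triangle_ineq4 order_trans)
    then show ?thesis
      using M by (simp add: g_def norm_divide)
  qed
  have "cmod ((z - z0) / of_real r) < 1"
    using z r by (simp add: norm_divide dist_norm norm_minus_commute)
  moreover have "g 0 = 0"
    by (simp add: g_def)
  ultimately have "cmod (g ((z - z0) / of_real r)) \<le> cmod ((z - z0) / of_real r)"
    using Schwarz_Lemma(1)[OF hol_g _ g_lt_1] by blast
  then show ?thesis
    using M r by (simp add: g_def norm_divide field_simps)
qed

lemma weighted_bound_imp_oscillation:
  fixes F :: "complex \<Rightarrow> complex"
  assumes hol: "F holomorphic_on unit_disk" and N: "0 < N"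
    and bound: "\<And>w. w \<in> unit_disk \<Longrightarrow> (1 - (cmod w)\<^sup>2)\<^sup>2 * cmod (F w) \<le> N"
    and z0: "z0 \<in> unit_disk" and c: "c \<le> 1/8" and z: "dist z0 z < c * (1 - (cmod z0)\<^sup>2)"
  shows "(1 - (cmod z0)\<^sup>2)\<^sup>2 * cmod (F z - F z0) \<le> 192 * N * c"
proof -
  define A where "A = 1 - (cmod z0)\<^sup>2"
  define r where "r = (1 - cmod z0) / 2"
  have n0: "cmod z0 < 1"
    using z0 by (simp add: unit_disk_def)
  have A: "0 < A" "A \<le> 4 * r"
    using n0 one_minus_square_le[of "cmod z0"] by (auto simp: A_def r_def abs_square_less_1)
  have "0 < c * A"
    using le_less_trans[OF zero_le_dist z] by (simp add: A_def)
  then have c0: "0 \<le> c"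
    using A by (simp add: zero_less_mult_iff)
  have sub: "ball z0 r \<subseteq> unit_disk"
    using ball_subset_unit_disk[OF z0, of "1/2"] by (simp add: r_def)
  have "cmod (F w) \<le> 16 * N / A\<^sup>2" if w: "w \<in> ball z0 r" for w
  proof -
    have "(A/4)\<^sup>2 \<le> (1 - (cmod w)\<^sup>2)\<^sup>2"
      using one_minus_norm_sq_near_ge[OF n0] w A by (intro power_mono) (auto simp: A_def r_def)
    then have "(A/4)\<^sup>2 * cmod (F w) \<le> (1 - (cmod w)\<^sup>2)\<^sup>2 * cmod (F w)"
      by (rule mult_right_mono) simp
    also have "\<dots> \<le> N"
      using bound w sub by blast
    finally have "(A/4)\<^sup>2 * cmod (F w) \<le> N" .
    then show ?thesis
      using A by (simp add: field_simps power2_eq_square)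
  qed
  moreover have "dist z0 z < r"
  proof -
    have "c * A \<le> 1/8 * A"
      using c A by (intro mult_right_mono) auto
    then show ?thesis
      using z[folded A_def] A by argo
  qed
  ultimately have "cmod (F z - F z0) \<le> 3 * (16 * N / A\<^sup>2) * cmod (z - z0) / r"
    using N A by (intro bounded_holomorphic_diff_le holomorphic_on_subset[OF hol sub]) auto
  also have "\<dots> \<le> 3 * (16 * N / A\<^sup>2) * (c * A) / (A / 4)"
  proof (intro frac_le mult_left_mono)
    show "cmod (z - z0) \<le> c * A"
      using z by (simp add: A_def dist_norm norm_minus_commute)
  qed (use A N c0 in auto)
  also have "\<dots> = 192 * N * c / A\<^sup>2"
    using A by (simp add: field_simps power2_eq_square)
  finally show ?thesis
    using A by (simp add: A_def[symmetric] field_simps)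
qed

lemma weighted_norm_stays_large:
  fixes F :: "complex \<Rightarrow> complex"
  assumes hol: "F holomorphic_on unit_disk" and N: "0 < N"
    and bound: "\<And>w. w \<in> unit_disk \<Longrightarrow> (1 - (cmod w)\<^sup>2)\<^sup>2 * cmod (F w) \<le> N"
    and \<delta>: "0 < \<delta>" and z0: "z0 \<in> unit_disk" and large: "\<delta> < (1 - (cmod z0)\<^sup>2)\<^sup>2 * cmod (F z0)"
    and z: "dist z0 z < min (1/8) (\<delta> / (768 * N)) * (1 - (cmod z0)\<^sup>2)"
  shows "\<delta> / 32 < (1 - (cmod z)\<^sup>2)\<^sup>2 * cmod (F z)"
proof -
  define A where "A = 1 - (cmod z0)\<^sup>2"
  have n0: "cmod z0 < 1"
    using z0 by (simp add: unit_disk_def)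
  then have A: "0 < A"
    by (simp add: A_def abs_square_less_1)
  have "(1 - (cmod z0)\<^sup>2)\<^sup>2 * cmod (F z - F z0) \<le> 192 * N * min (1/8) (\<delta> / (768 * N))"
    using weighted_bound_imp_oscillation[OF hol N bound z0 _ z] by simp
  also have "\<dots> \<le> \<delta> / 4"
    using N by (simp add: min_def field_simps)
  finally have osc: "A\<^sup>2 * cmod (F z - F z0) \<le> \<delta> / 4"
    by (simp add: A_def)
  have "A\<^sup>2 * cmod (F z0) \<le> A\<^sup>2 * cmod (F z) + A\<^sup>2 * cmod (F z - F z0)"
    using mult_left_mono[OF norm_triangle_ineq4[of "F z" "F z - F z0"], of "A\<^sup>2"]
    by (simp add: distrib_left)
  then have large_z: "3 * \<delta> / 4 < A\<^sup>2 * cmod (F z)"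
    using large osc by (simp add: A_def)
  have "A / 4 \<le> 1 - (cmod z)\<^sup>2"
  proof -
    have "min (1/8) (\<delta> / (768 * N)) * A \<le> 1/8 * A"
      using n0 by (intro mult_right_mono) (auto simp: A_def abs_square_le_1)
    then have "dist z0 z < A / 8"
      using z by (simp add: A_def)
    then have "dist z0 z < (1 - cmod z0) / 2"
      using one_minus_square_le[of "cmod z0"] n0 by (simp add: A_def)
    then show ?thesis
      using one_minus_norm_sq_near_ge[OF n0] by (simp add: A_def)
  qed
  then have "(A / 4)\<^sup>2 \<le> (1 - (cmod z)\<^sup>2)\<^sup>2"
    using A by (intro power_mono) auto
  then have "A\<^sup>2 / 16 \<le> (1 - (cmod z)\<^sup>2)\<^sup>2"
    by (simp add: power_divide)
  then have "A\<^sup>2 / 16 * cmod (F z) \<le> (1 - (cmod z)\<^sup>2)\<^sup>2 * cmod (F z)"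
    by (rule mult_right_mono) simp
  with large_z \<delta> show ?thesis
    by simp
qed

section \<open>Uniformly locally univalent functions\<close>

lemma unif_loc_univalent_inj_on_balls:
  assumes "unif_loc_univalent h"
  obtains t :: real where "0 < t" "t \<le> 1"
    "\<And>a. a \<in> unit_disk \<Longrightarrow> inj_on h (ball a (t * (1 - cmod a)))"
proof -
  obtain \<rho> where "0 < \<rho>" and inj: "\<And>a. a \<in> unit_disk \<Longrightarrow> inj_on h (hyp_disk a \<rho>)"
    using assms unfolding unif_loc_univalent_def by blast
  then obtain t where "0 < t" "t \<le> 1"
    and "\<And>a. a \<in> unit_disk \<Longrightarrow> ball a (t * (1 - cmod a)) \<subseteq> hyp_disk a \<rho>"
    using ball_subset_hyp_disk by blast
  with inj show ?thesis
    using that inj_on_subset by metis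
qed

lemma unif_loc_univalent_deriv_nonzero:
  assumes "h holomorphic_on unit_disk" "unif_loc_univalent h" "a \<in> unit_disk"
  shows "deriv h a \<noteq> 0"
proof -
  obtain t where t: "0 < t" "t \<le> 1" "inj_on h (ball a (t * (1 - cmod a)))"
    using unif_loc_univalent_inj_on_balls[OF assms(2)] assms(3) by metis
  moreover have "ball a (t * (1 - cmod a)) \<subseteq> unit_disk"
    using ball_subset_unit_disk[OF assms(3) t(2)] .
  moreover have "a \<in> ball a (t * (1 - cmod a))"
    using t(1) assms(3) by (simp add: unit_disk_def)
  ultimately show ?thesis
    using holomorphic_injective_imp_regular[OF _ open_ball] holomorphic_on_subset[OF assms(1)] by blast
qed

lemma unif_loc_univalent_schwarzian_norm_bounded:
  assumes hol: "h holomorphic_on unit_disk" and "unif_loc_univalent h"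
  obtains N where "0 < N" "\<And>a. a \<in> unit_disk \<Longrightarrow> (1 - (cmod a)\<^sup>2)\<^sup>2 * cmod (schwarzian h a) \<le> N"
proof -
  define K where "K = 96 * (4 * univalent_growth_const + (4 * univalent_growth_const)\<^sup>2)"
  obtain t where t: "0 < t" "t \<le> 1" and inj: "\<And>a. a \<in> unit_disk \<Longrightarrow> inj_on h (ball a (t * (1 - cmod a)))"
    using unif_loc_univalent_inj_on_balls[OF assms(2)] by blast
  show ?thesis
  proof
    show "0 < 4 * K / t\<^sup>2"
      using t by (simp add: K_def univalent_growth_const_def add_pos_nonneg)
    fix a assume a: "a \<in> unit_disk"
    define x where "x = 1 - cmod a"
    define R where "R = t * x"
    have na: "cmod a < 1" and x: "0 < x" and R: "0 < R"
      using a t by (auto simp: unit_disk_def R_def x_def)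
    have "h holomorphic_on ball a R"
      using holomorphic_on_subset[OF hol ball_subset_unit_disk[OF a t(2)]] by (simp add: R_def x_def)
    then have S: "cmod (schwarzian h a) \<le> K / R\<^sup>2"
      using univalent_schwarzian_bound[OF _ _ R] inj[OF a] by (simp add: K_def R_def x_def)
    have "(1 - (cmod a)\<^sup>2)\<^sup>2 \<le> (2 * x)\<^sup>2"
      using one_minus_square_le[of "cmod a"] na by (intro power_mono) (auto simp: x_def abs_square_le_1)
    then have "(1 - (cmod a)\<^sup>2)\<^sup>2 * cmod (schwarzian h a) \<le> (2 * x)\<^sup>2 * (K / R\<^sup>2)"
      using S by (intro mult_mono) auto
    also have "\<dots> = 4 * K / t\<^sup>2"
      using x t by (simp add: R_def field_simps power2_eq_square)
    finally show "(1 - (cmod a)\<^sup>2)\<^sup>2 * cmod (schwarzian h a) \<le> 4 * K / t\<^sup>2" .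
  qed
qed

theorem mainTheorem5:
  fixes h :: "complex \<Rightarrow> complex" and \<delta> :: real
  assumes "h analytic_on unit_disk"
    and "unif_loc_univalent h"
    and "\<delta> > 0"
    and "\<exists>z0 \<in> unit_disk. (1 - (cmod z0)\<^sup>2)\<^sup>2 * cmod (schwarzian h z0) > \<delta>"
  shows "\<exists>c::real. 0 < c \<and> c < 1 \<and>
           (\<forall>z0 \<in> unit_disk. (1 - (cmod z0)\<^sup>2)\<^sup>2 * cmod (schwarzian h z0) > \<delta> \<longrightarrow>
              (\<forall>z \<in> ball z0 (c * (1 - (cmod z0)\<^sup>2)).
                  (1 - (cmod z)\<^sup>2)\<^sup>2 * cmod (schwarzian h z) > \<delta> / 32))"
proof -
  have hol: "h holomorphic_on unit_disk"
    using assms(1) analytic_imp_holomorphic by blast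
  obtain N where N: "0 < N"
    and bound: "\<And>a. a \<in> unit_disk \<Longrightarrow> (1 - (cmod a)\<^sup>2)\<^sup>2 * cmod (schwarzian h a) \<le> N"
    using unif_loc_univalent_schwarzian_norm_bounded[OF hol assms(2)] by blast
  have hol_S: "schwarzian h holomorphic_on unit_disk"
    using schwarzian_holomorphic[OF hol _ unif_loc_univalent_deriv_nonzero[OF hol assms(2)]]
    by (simp add: unit_disk_def)
  show ?thesis
  proof (intro exI conjI ballI impI)
    show "0 < min (1/8) (\<delta> / (768 * N))" "min (1/8) (\<delta> / (768 * N)) < 1"
      using assms(3) N by auto
    fix z0 z
    assume "z0 \<in> unit_disk" "\<delta> < (1 - (cmod z0)\<^sup>2)\<^sup>2 * cmod (schwarzian h z0)"
      and "z \<in> ball z0 (min (1/8) (\<delta> / (768 * N)) * (1 - (cmod z0)\<^sup>2))"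
    then show "\<delta> / 32 < (1 - (cmod z)\<^sup>2)\<^sup>2 * cmod (schwarzian h z)"
      using weighted_norm_stays_large[OF hol_S N bound assms(3)] by simp
  qed
qed

end
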